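(* Let $\mathcal{F}=\{f_1,\dots,f_M\}$ be a frame of $\mathbb{R}^N$ partitioned into $K$ disjoint pools $\mathcal{F}_k=\{f_j\}_{j\in I_k}$, $k=1,\dots,K$, with $I_k\cap I_{k'}=\emptyset$ for $k\neq k'$, $\bigcup_k I_k=\{1,\dots,M\}$ and $|I_k|=d$ for all $k$. Let $P_2(x)=\big(\|\mathcal{F}_k^T x\|_2\big)_{k=1}^K$ be the $\ell_2$ pooling operator. Then for all $x,x'\in\mathbb{R}^N$, $$A_2\, d(x,x')\le \|P_2(x)-P_2(x')\|_2\le B_2\, d(x,x'),$$ where $d(x,x')=\min(\|x-x'\|,\|x+x'\|)$, $$A_2=\min_{\mathcal{F}'\in\mathcal{Q}_2}\ \min_{\Omega\subset\{1,\dots,M\}}\sqrt{\lambda_-^2(\mathcal{F}'_\Omega)+\lambda_-^2(\mathcal{F}'_{\Omega^c})},\qquad B_2=\lambda_+(\mathcal{F}),$$ and $\mathcal{Q}_2$ is the family of frames $\mathcal{F}'=(U_k\mathcal{F}_k)_{k\le K}$ obtained by choosing, for each $k$, an orthogonal matrix $U_k\in\mathbb{R}^{d\times d}$ ($U_k^TU_k=\mathrm{Id}$) and replacing the $d$ vectors of pool $k$ by the $d$ vectors obtained by applying $U_k$ to them (i.e. the columns of $\mathcal{F}_kU_k^T$, where $\mathcal{F}_k$ is viewed as the $N\times d$ matrix with columns $f_j$, $j\in I_k$), so that each pool is replaced by another frame of the same subspace with the same frame operator.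
   Context: For a finite family of vectors $G=\{g_i\}$ in $\mathbb{R}^N$, $\lambda_-(G)=\inf_{\|x\|=1}\big(\sum_i\langle x,g_i\rangle^2\big)^{1/2}$ and $\lambda_+(G)=\sup_{\|x\|=1}\big(\sum_i\langle x,g_i\rangle^2\big)^{1/2}$ denote its lower and upper frame bounds (in square-root form), with $\lambda_-(\emptyset)=0$. For $\Omega\subset\{1,\dots,M\}$, $\mathcal{F}'_\Omega$ is the subfamily of vectors of $\mathcal{F}'$ indexed by $\Omega$, and $\Omega^c$ is the complement of $\Omega$ in $\{1,\dots,M\}$. *)

theory Defs
  imports "HOL-Analysis.Analysis"
begin

text \<open>Frame bounds (square-root form) of the subfamily of g indexed by S.
  For S empty the sum is 0, so the lower bound is 0.\<close>
definition lam_minus :: "('i \<Rightarrow> real^'n::finite) \<Rightarrow> 'i set \<Rightarrow> real" where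
  "lam_minus g S = (INF x\<in>{x::real^'n. norm x = 1}. sqrt (\<Sum>i\<in>S. (x \<bullet> g i)^2))"

definition lam_plus :: "('i \<Rightarrow> real^'n::finite) \<Rightarrow> 'i set \<Rightarrow> real" where
  "lam_plus g S = (SUP x\<in>{x::real^'n. norm x = 1}. sqrt (\<Sum>i\<in>S. (x \<bullet> g i)^2))"

text \<open>A frame with K pools of size d: vector j of pool k is f k j.\<close>
definition is_frame :: "('k::finite \<Rightarrow> 'd::finite \<Rightarrow> real^'n::finite) \<Rightarrow> bool" where
  "is_frame f \<longleftrightarrow> span (range (case_prod f)) = UNIV"

definition pool2 :: "('k::finite \<Rightarrow> 'd::finite \<Rightarrow> real^'n::finite) \<Rightarrow> real^'n \<Rightarrow> real^'k" where
  "pool2 f x = (\<chi> k. sqrt (\<Sum>j\<in>UNIV. (f k j \<bullet> x)^2))"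

definition Q2 :: "('k::finite \<Rightarrow> 'd::finite \<Rightarrow> real^'n::finite) \<Rightarrow> ('k \<Rightarrow> 'd \<Rightarrow> real^'n) set" where
  "Q2 f = {(\<lambda>k i. \<Sum>j\<in>UNIV. (U k $ i $ j) *\<^sub>R f k j) | U :: 'k \<Rightarrow> real^'d^'d.
             \<forall>k. orthogonal_matrix (U k)}"

definition A2 :: "('k::finite \<Rightarrow> 'd::finite \<Rightarrow> real^'n::finite) \<Rightarrow> real" where
  "A2 f = (INF F'\<in>Q2 f. INF \<Omega>\<in>(UNIV :: ('k \<times> 'd) set set).
     sqrt ((lam_minus (case_prod F') \<Omega>)^2 + (lam_minus (case_prod F') (- \<Omega>))^2))"

definition B2 :: "('k::finite \<Rightarrow> 'd::finite \<Rightarrow> real^'n::finite) \<Rightarrow> real" where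
  "B2 f = lam_plus (case_prod f) UNIV"

definition dpm :: "real^'n::finite \<Rightarrow> real^'n \<Rightarrow> real" where
  "dpm x x' = min (norm (x - x')) (norm (x + x'))"

end

theory Submission
  imports Defs
begin

text \<open>Write a_k = F_k^T x and b_k = F_k^T x', so that the squared pooling distance is
  \<Sum>_k (|a_k| - |b_k|)^2. The upper bound follows from ||a_k| - |b_k|| \<le> |a_k \<mp> b_k| and the
  upper frame bound of F. For the lower bound, the two vectors a_k, b_k of each pool can be
  rotated by an orthogonal U_k so that, for a suitable set of coordinates \<Omega>_k,
  \<Sum>_{\<Omega>_k} (U_k(a_k - b_k))_i^2 + \<Sum>_{\<Omega>_k^c} (U_k(a_k + b_k))_i^2 = (|a_k| - |b_k|)^2:
  take as first row of U_k the unit bisector of a_k and b_k. Rotating pool k by U_k yields a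
  frame F' in Q_2, and the lower frame bounds of F' on \<Omega> and \<Omega>^c, applied to x - x' and x + x',
  give the estimate with A_2.\<close>

lemma power2_norm_vec: "norm (v :: real^'d) ^ 2 = (\<Sum>i\<in>UNIV. (v $ i)^2)"
  unfolding power2_norm_eq_inner inner_vec_def by (simp add: power2_eq_square)

lemma norm_orthogonal_matrix_mult:
  fixes U :: "real^'d^'d"
  assumes "orthogonal_matrix U"
  shows "norm (U *v v) = norm v"
proof -
  have "orthogonal_transformation ((*v) U)"
    using assms by (simp add: orthogonal_transformation_matrix matrix_of_matrix_vector_mul)
  then show ?thesis by (simp add: orthogonal_transformation)
qed

lemma orthogonal_matrix_with_row:
  fixes u :: "real^'d"
  assumes "norm u = 1"
  obtains U where "orthogonal_matrix U" "\<And>v. (U *v v) $ k = u \<bullet> v"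
proof -
  obtain A where A: "orthogonal_matrix A" "A *v axis k 1 = u"
    using orthogonal_matrix_exists_basis assms by metis
  have "u $ j = A $ j $ k" for j
    using A(2) by (simp add: matrix_vector_mult_def axis_def vec_eq_iff if_distrib cong: if_cong)
  then have "(transpose A *v v) $ k = u \<bullet> v" for v
    by (simp add: matrix_vector_mult_def transpose_def inner_vec_def mult.commute)
  with A(1) that[of "transpose A"] show thesis by simp
qed

text \<open>The witness is the unit vector along |b| a + |a| b, the bisector of a and b.\<close>

lemma exists_unit_inner_mult_eq:
  fixes a b :: "real^'d"
  assumes pos: "norm a * norm b + a \<bullet> b > 0"
  shows "\<exists>u. norm u = 1 \<and> (u \<bullet> a) * (u \<bullet> b) = (norm a * norm b + a \<bullet> b) / 2"
proof -
  define r s c where "r = norm a" and "s = norm b" and "c = norm a * norm b + a \<bullet> b"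
  have "r > 0" "s > 0" "c > 0"
    using pos by (auto simp: r_def s_def c_def)
  define w where "w = s *\<^sub>R a + r *\<^sub>R b"
  have aa: "a \<bullet> a = r^2" "b \<bullet> b = s^2"
    by (simp_all add: r_def s_def power2_norm_eq_inner)
  have wa: "w \<bullet> a = r * c" and wb: "w \<bullet> b = s * c" and ww: "w \<bullet> w = 2 * r * s * c"
    using aa by (auto simp: w_def c_def r_def s_def inner_add_left inner_add_right inner_commute
        algebra_simps power2_eq_square)
  have "w \<bullet> w > 0"
    using ww \<open>r > 0\<close> \<open>s > 0\<close> \<open>c > 0\<close> by simp
  then have "norm w ^ 2 = w \<bullet> w" "norm w > 0"
    by (auto simp: power2_norm_eq_inner)
  then have "((w /\<^sub>R norm w) \<bullet> a) * ((w /\<^sub>R norm w) \<bullet> b) = (w \<bullet> a) * (w \<bullet> b) / (w \<bullet> w)"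
    by (simp add: field_simps power2_eq_square)
  also have "\<dots> = c / 2"
    unfolding wa wb ww using \<open>r > 0\<close> \<open>s > 0\<close> \<open>c > 0\<close> by (simp add: field_simps)
  finally show ?thesis
    using \<open>norm w > 0\<close> by (intro exI[of _ "w /\<^sub>R norm w"]) (simp add: c_def)
qed

lemma orthogonal_split_eq_power2_norm_diff:
  fixes a b :: "real^'d"
  shows "\<exists>U \<Omega>. orthogonal_matrix U \<and>
     (\<Sum>i\<in>\<Omega>. ((U *v (a - b)) $ i)^2) + (\<Sum>i\<in>-\<Omega>. ((U *v (a + b)) $ i)^2) = (norm a - norm b)^2"
proof (cases "norm a * norm b + a \<bullet> b > 0")
  case False
  have "- (norm a * norm b) \<le> a \<bullet> b"
    using norm_cauchy_schwarz[of "-a" b] by simp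
  then have "a \<bullet> b = - (norm a * norm b)"
    using False by linarith
  then have "norm (a + b)^2 = (norm a - norm b)^2"
    by (simp add: dot_norm power2_diff)
  then show ?thesis
    by (intro exI[of _ "mat 1"] exI[of _ "{}"]) (simp add: orthogonal_matrix_id power2_norm_vec)
next
  case True
  obtain u where u: "norm u = 1" "(u \<bullet> a) * (u \<bullet> b) = (norm a * norm b + a \<bullet> b) / 2"
    using exists_unit_inner_mult_eq[OF True] by blast
  fix k :: 'd
  obtain U where U: "orthogonal_matrix U" "\<And>v. (U *v v) $ k = u \<bullet> v"
    using orthogonal_matrix_with_row[OF u(1)] by blast
  have "norm (a + b)^2 = norm (U *v (a + b))^2"
    by (simp add: norm_orthogonal_matrix_mult[OF U(1)])
  also have "\<dots> = ((U *v (a + b)) $ k)^2 + (\<Sum>i\<in>-{k}. ((U *v (a + b)) $ i)^2)"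
    unfolding power2_norm_vec by (simp add: sum.remove Compl_eq_Diff_UNIV)
  finally have "(\<Sum>i\<in>{k}. ((U *v (a - b)) $ i)^2) + (\<Sum>i\<in>-{k}. ((U *v (a + b)) $ i)^2)
      = norm (a + b)^2 - 4 * ((u \<bullet> a) * (u \<bullet> b))"
    by (simp add: U(2) inner_diff_right inner_add_right power2_eq_square algebra_simps)
  also have "\<dots> = (norm a - norm b)^2"
    unfolding u(2) dot_norm[of a b] by (simp add: power2_diff field_simps)
  finally show ?thesis
    using U(1) by blast
qed

lemma sum_power2_inner_normalize:
  fixes z :: "real^'n"
  assumes "z \<noteq> 0"
  shows "(\<Sum>i\<in>S. (z \<bullet> g i)^2) = norm z ^ 2 * (\<Sum>i\<in>S. ((z /\<^sub>R norm z) \<bullet> g i)^2)"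
  using assms by (simp add: sum_distrib_left power_mult_distrib field_simps)

lemma lam_minus_nonneg: "lam_minus g S \<ge> 0"
  unfolding lam_minus_def
  by (intro cINF_greatest) (auto intro: exI[of _ "axis undefined 1"] sum_nonneg)

lemma power2_lam_minus_le_unit:
  fixes g :: "'i \<Rightarrow> real^'n::finite"
  assumes "norm u = 1"
  shows "(lam_minus g S)^2 \<le> (\<Sum>i\<in>S. (u \<bullet> g i)^2)"
proof -
  have "lam_minus g S \<le> sqrt (\<Sum>i\<in>S. (u \<bullet> g i)^2)"
    unfolding lam_minus_def using assms
    by (intro cINF_lower bdd_belowI[of _ 0]) (auto intro!: sum_nonneg)
  then have "(lam_minus g S)^2 \<le> (sqrt (\<Sum>i\<in>S. (u \<bullet> g i)^2))^2"
    by (rule power_mono) (rule lam_minus_nonneg)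
  then show ?thesis
    by (simp add: sum_nonneg)
qed

lemma power2_lam_minus_le:
  fixes g :: "'i \<Rightarrow> real^'n::finite"
  shows "(lam_minus g S)^2 * norm z ^ 2 \<le> (\<Sum>i\<in>S. (z \<bullet> g i)^2)"
proof (cases "z = 0")
  case False
  then show ?thesis
    using power2_lam_minus_le_unit[of "z /\<^sub>R norm z" g S]
    unfolding sum_power2_inner_normalize[OF False] by (simp add: mult.commute)
qed (simp add: sum_nonneg)

lemma sqrt_sum_power2_inner_le_lam_plus:
  fixes g :: "'i \<Rightarrow> real^'n::finite"
  assumes "norm u = 1"
  shows "sqrt (\<Sum>i\<in>S. (u \<bullet> g i)^2) \<le> lam_plus g S"
proof -
  have bound: "sqrt (\<Sum>i\<in>S. (x \<bullet> g i)^2) \<le> sqrt (\<Sum>i\<in>S. (norm (g i))^2)"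
    if "norm x = 1" for x
  proof -
    have "\<bar>x \<bullet> g i\<bar> \<le> norm (g i)" for i
      using Cauchy_Schwarz_ineq2[of x "g i"] that by simp
    then show ?thesis
      by (intro real_sqrt_le_mono sum_mono) (metis abs_ge_zero power2_abs power_mono)
  qed
  have "bdd_above ((\<lambda>x. sqrt (\<Sum>i\<in>S. (x \<bullet> g i)^2)) ` {x. norm x = 1})"
    by (rule bdd_aboveI2, rule bound) simp
  then show ?thesis
    unfolding lam_plus_def using assms by (intro cSUP_upper) auto
qed

lemma lam_plus_nonneg:
  fixes g :: "'i \<Rightarrow> real^'n::finite"
  shows "lam_plus g S \<ge> 0"
proof -
  have "0 \<le> sqrt (\<Sum>i\<in>S. (axis undefined 1 \<bullet> g i)^2)"
    by (simp add: sum_nonneg)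
  also have "\<dots> \<le> lam_plus g S"
    by (rule sqrt_sum_power2_inner_le_lam_plus) simp
  finally show ?thesis .
qed

lemma sum_power2_inner_le_lam_plus_unit:
  fixes g :: "'i \<Rightarrow> real^'n::finite"
  assumes "norm u = 1"
  shows "(\<Sum>i\<in>S. (u \<bullet> g i)^2) \<le> (lam_plus g S)^2"
proof -
  have "(sqrt (\<Sum>i\<in>S. (u \<bullet> g i)^2))^2 \<le> (lam_plus g S)^2"
    using sqrt_sum_power2_inner_le_lam_plus[OF assms] by (rule power_mono) (simp add: sum_nonneg)
  then show ?thesis
    by (simp add: sum_nonneg)
qed

lemma sum_power2_inner_le_lam_plus:
  fixes g :: "'i \<Rightarrow> real^'n::finite"
  shows "(\<Sum>i\<in>S. (z \<bullet> g i)^2) \<le> (lam_plus g S)^2 * norm z ^ 2"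
proof (cases "z = 0")
  case False
  then show ?thesis
    using sum_power2_inner_le_lam_plus_unit[of "z /\<^sub>R norm z" g S]
    unfolding sum_power2_inner_normalize[OF False] by (simp add: mult.commute)
qed simp

definition pool_coeffs :: "('k \<Rightarrow> 'd \<Rightarrow> real^'n) \<Rightarrow> real^'n \<Rightarrow> 'k \<Rightarrow> real^'d" where
  "pool_coeffs f x k = (\<chi> j. f k j \<bullet> x)"

definition rotate_pools ::
    "('k \<Rightarrow> 'd::finite \<Rightarrow> real^'n) \<Rightarrow> ('k \<Rightarrow> real^'d^'d) \<Rightarrow> 'k \<Rightarrow> 'd \<Rightarrow> real^'n" where
  "rotate_pools f U = (\<lambda>k i. \<Sum>j\<in>UNIV. (U k $ i $ j) *\<^sub>R f k j)"

lemma rotate_pools_in_Q2: "(\<And>k. orthogonal_matrix (U k)) \<Longrightarrow> rotate_pools f U \<in> Q2 f"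
  unfolding Q2_def rotate_pools_def by blast

lemma pool_coeffs_rotate_pools: "pool_coeffs (rotate_pools f U) z k = U k *v pool_coeffs f z k"
  by (simp add: pool_coeffs_def rotate_pools_def matrix_vector_mult_def vec_eq_iff
      inner_sum_left mult.commute)

lemma pool_coeffs_diff: "pool_coeffs f (x - y) k = pool_coeffs f x k - pool_coeffs f y k"
  by (simp add: pool_coeffs_def vec_eq_iff inner_diff_right)

lemma pool_coeffs_add: "pool_coeffs f (x + y) k = pool_coeffs f x k + pool_coeffs f y k"
  by (simp add: pool_coeffs_def vec_eq_iff inner_add_right)

lemma pool2_component: "pool2 f x $ k = norm (pool_coeffs f x k)"
proof -
  have "norm (pool_coeffs f x k) = sqrt (norm (pool_coeffs f x k) ^ 2)"
    by simp
  then show ?thesis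
    unfolding power2_norm_vec by (simp add: pool2_def pool_coeffs_def)
qed

lemma pool2_uminus: "pool2 f (- x) = pool2 f x"
  by (simp add: pool2_def)

lemma power2_norm_pool2_diff:
  "norm (pool2 f x - pool2 f y)^2 = (\<Sum>k\<in>UNIV. (norm (pool_coeffs f x k) - norm (pool_coeffs f y k))^2)"
  unfolding power2_norm_vec by (simp add: pool2_component)

lemma sum_Sigma_power2_inner:
  fixes f :: "'k::finite \<Rightarrow> 'd::finite \<Rightarrow> real^'n"
  shows "(\<Sum>p\<in>Sigma UNIV \<Omega>. (z \<bullet> case_prod f p)^2) = (\<Sum>k\<in>UNIV. \<Sum>i\<in>\<Omega> k. (pool_coeffs f z k $ i)^2)"
  by (subst sum.Sigma) (auto simp: split_def pool_coeffs_def inner_commute)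

lemma norm_pool2_diff_le_B2: "norm (pool2 f x - pool2 f y) \<le> B2 f * norm (x - y)"
proof -
  have "norm (pool2 f x - pool2 f y)^2
      \<le> (\<Sum>k\<in>UNIV. norm (pool_coeffs f (x - y) k)^2)"
    unfolding power2_norm_pool2_diff pool_coeffs_diff
    by (intro sum_mono) (simp add: abs_le_square_iff[symmetric] norm_triangle_ineq3)
  also have "\<dots> = (\<Sum>p\<in>UNIV. ((x - y) \<bullet> case_prod f p)^2)"
    using sum_Sigma_power2_inner[where \<Omega> = "\<lambda>_. UNIV" and z = "x - y" and f = f]
    by (simp add: power2_norm_vec UNIV_Times_UNIV)
  also have "\<dots> \<le> (B2 f * norm (x - y))^2"
    unfolding B2_def power_mult_distrib by (rule sum_power2_inner_le_lam_plus)
  finally show ?thesis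
    by (rule power2_le_imp_le) (simp add: B2_def lam_plus_nonneg)
qed

lemma A2_le:
  assumes "F' \<in> Q2 f"
  shows "A2 f \<le> sqrt ((lam_minus (case_prod F') \<Omega>)^2 + (lam_minus (case_prod F') (- \<Omega>))^2)"
proof -
  have "A2 f \<le> (INF \<Omega>\<in>UNIV. sqrt ((lam_minus (case_prod F') \<Omega>)^2 + (lam_minus (case_prod F') (- \<Omega>))^2))"
    unfolding A2_def
    by (rule cINF_lower[OF _ assms], rule bdd_belowI[of _ 0]) (auto intro!: cINF_greatest)
  also have "\<dots> \<le> sqrt ((lam_minus (case_prod F') \<Omega>)^2 + (lam_minus (case_prod F') (- \<Omega>))^2)"
    by (rule cINF_lower) (auto intro!: bdd_belowI[of _ 0])
  finally show ?thesis .
qed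

lemma exists_Q2_split_eq_power2_norm_pool2_diff:
  "\<exists>F'\<in>Q2 f. \<exists>\<Omega>. (\<Sum>p\<in>\<Omega>. ((x - y) \<bullet> case_prod F' p)^2) + (\<Sum>p\<in>-\<Omega>. ((x + y) \<bullet> case_prod F' p)^2)
      = norm (pool2 f x - pool2 f y)^2"
proof -
  let ?a = "pool_coeffs f x" and ?b = "pool_coeffs f y"
  have "\<exists>U \<Omega>. orthogonal_matrix U \<and> (\<Sum>i\<in>\<Omega>. ((U *v (?a k - ?b k)) $ i)^2)
      + (\<Sum>i\<in>-\<Omega>. ((U *v (?a k + ?b k)) $ i)^2) = (norm (?a k) - norm (?b k))^2" for k
    by (rule orthogonal_split_eq_power2_norm_diff)
  then obtain U \<Omega> where U: "\<And>k. orthogonal_matrix (U k)"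
    and split: "\<And>k. (\<Sum>i\<in>\<Omega> k. ((U k *v (?a k - ?b k)) $ i)^2)
      + (\<Sum>i\<in>-\<Omega> k. ((U k *v (?a k + ?b k)) $ i)^2) = (norm (?a k) - norm (?b k))^2"
    by metis
  have compl: "- Sigma UNIV \<Omega> = Sigma UNIV (\<lambda>k. - \<Omega> k)"
    by auto
  have "(\<Sum>p\<in>Sigma UNIV \<Omega>. ((x - y) \<bullet> case_prod (rotate_pools f U) p)^2)
      + (\<Sum>p\<in>- Sigma UNIV \<Omega>. ((x + y) \<bullet> case_prod (rotate_pools f U) p)^2)
      = (\<Sum>k\<in>UNIV. (\<Sum>i\<in>\<Omega> k. ((U k *v (?a k - ?b k)) $ i)^2)
          + (\<Sum>i\<in>-\<Omega> k. ((U k *v (?a k + ?b k)) $ i)^2))"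
    unfolding compl sum_Sigma_power2_inner pool_coeffs_rotate_pools
    unfolding pool_coeffs_diff pool_coeffs_add
    by (rule sum.distrib[symmetric])
  also have "\<dots> = norm (pool2 f x - pool2 f y)^2"
    unfolding split power2_norm_pool2_diff ..
  finally show ?thesis
    using rotate_pools_in_Q2[of U f] U by blast
qed

lemma A2_mult_dpm_le: "A2 f * dpm x y \<le> norm (pool2 f x - pool2 f y)"
proof -
  obtain F' \<Omega> where "F' \<in> Q2 f" and split:
    "(\<Sum>p\<in>\<Omega>. ((x - y) \<bullet> case_prod F' p)^2) + (\<Sum>p\<in>-\<Omega>. ((x + y) \<bullet> case_prod F' p)^2)
      = norm (pool2 f x - pool2 f y)^2"
    using exists_Q2_split_eq_power2_norm_pool2_diff by blast
  define l1 l2 where "l1 = lam_minus (case_prod F') \<Omega>" and "l2 = lam_minus (case_prod F') (- \<Omega>)"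
  have d: "0 \<le> dpm x y" "dpm x y \<le> norm (x - y)" "dpm x y \<le> norm (x + y)"
    by (simp_all add: dpm_def)
  have "(sqrt (l1^2 + l2^2) * dpm x y)^2 = l1^2 * dpm x y ^ 2 + l2^2 * dpm x y ^ 2"
    by (simp add: power_mult_distrib algebra_simps)
  also have "\<dots> \<le> l1^2 * norm (x - y)^2 + l2^2 * norm (x + y)^2"
    using d by (intro add_mono mult_left_mono power_mono) simp_all
  also have "\<dots> \<le> norm (pool2 f x - pool2 f y)^2"
    unfolding split[symmetric] l1_def l2_def by (intro add_mono power2_lam_minus_le)
  finally have "sqrt (l1^2 + l2^2) * dpm x y \<le> norm (pool2 f x - pool2 f y)"
    by (rule power2_le_imp_le) simp
  moreover have "A2 f * dpm x y \<le> sqrt (l1^2 + l2^2) * dpm x y"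
    using A2_le[OF \<open>F' \<in> Q2 f\<close>] d(1) unfolding l1_def l2_def by (rule mult_right_mono)
  ultimately show ?thesis
    by linarith
qed

theorem proposition3:
  fixes f :: "'k::finite \<Rightarrow> 'd::finite \<Rightarrow> real^'n::finite"
    and x x' :: "real^'n"
  assumes "is_frame f"
  shows "A2 f * dpm x x' \<le> norm (pool2 f x - pool2 f x')
       \<and> norm (pool2 f x - pool2 f x') \<le> B2 f * dpm x x'"
proof
  show "A2 f * dpm x x' \<le> norm (pool2 f x - pool2 f x')"
    by (rule A2_mult_dpm_le)
  have "norm (pool2 f x - pool2 f x') \<le> B2 f * norm (x - x')"
    by (rule norm_pool2_diff_le_B2)
  moreover have "norm (pool2 f x - pool2 f x') \<le> B2 f * norm (x + x')"
    using norm_pool2_diff_le_B2[of f x "- x'"] by (simp add: pool2_uminus)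
  ultimately show "norm (pool2 f x - pool2 f x') \<le> B2 f * dpm x x'"
    by (simp add: dpm_def min_mult_distrib_left B2_def lam_plus_nonneg)
qed

end
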